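(* Let $G:\mathbb{R}_+\to\mathbb{R}_+$ with $G(0)>0$ be a convolution kernel that preserves nonnegativity in the following sense: for any $K\in\mathbb{N}^*$, $x_1,\dots,x_K\in\mathbb{R}$ and $0\le t_1<\dots<t_K$ such that $\sum_{k'=1}^kx_{k'}G(t_k-t_{k'})\ge0$ for all $k\in\{1,\dots,K\}$, one has $\sum_{k:t_k\le t}x_kG(t-t_k)\ge0$ for all $t\ge0$. Let $\rho$ be a Borel measure on $\mathbb{R}_+$ finite on compact sets. Then the double kernels $\Gamma^r(t,s)=G(\rho((s,t]))$ and $\Gamma^\ell(t,s)=G(\rho([s,t)))$, $0\le s\le t$, preserve nonnegativity.
   Context: A double kernel $\Gamma:\{(t,s):0\le s\le t\}\to\mathbb{R}_+$ preserves nonnegativity if for every $T>0$, any $K\in\mathbb{N}^*$, $x_1,\dots,x_K\in\mathbb{R}$ and $0\le t_1<\dots<t_K<T$ with $\sum_{k'=1}^kx_{k'}\Gamma(t_k,t_{k'})\ge0$ for all $k$, one has $\sum_{k:t_k\le t}x_k\Gamma(t,t_k)\ge0$ for all $t\in[0,T]$. *)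

theory Defs
  imports "HOL-Analysis.Analysis"
begin

text \<open>Points t_1 < ... < t_K are indexed 0..K-1 (functions nat => real on {..<K}).\<close>

definition preserves_nonneg_conv :: "(real \<Rightarrow> real) \<Rightarrow> bool" where
  "preserves_nonneg_conv G \<longleftrightarrow>
     (\<forall>(K::nat) (x::nat \<Rightarrow> real) (tt::nat \<Rightarrow> real).
        K \<ge> 1 \<longrightarrow> 0 \<le> tt 0 \<longrightarrow> (\<forall>i j. i < j \<longrightarrow> j < K \<longrightarrow> tt i < tt j) \<longrightarrow>
        (\<forall>k<K. (\<Sum>k'\<le>k. x k' * G (tt k - tt k')) \<ge> 0) \<longrightarrow>
        (\<forall>t\<ge>0. (\<Sum>k\<in>{k. k < K \<and> tt k \<le> t}. x k * G (t - tt k)) \<ge> 0))"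

definition preserves_nonneg_double :: "(real \<Rightarrow> real \<Rightarrow> real) \<Rightarrow> bool" where
  "preserves_nonneg_double \<Gamma> \<longleftrightarrow>
     (\<forall>(T::real) (K::nat) (x::nat \<Rightarrow> real) (tt::nat \<Rightarrow> real).
        T > 0 \<longrightarrow> K \<ge> 1 \<longrightarrow> 0 \<le> tt 0 \<longrightarrow> (\<forall>i j. i < j \<longrightarrow> j < K \<longrightarrow> tt i < tt j) \<longrightarrow>
        tt (K - 1) < T \<longrightarrow>
        (\<forall>k<K. (\<Sum>k'\<le>k. x k' * \<Gamma> (tt k) (tt k')) \<ge> 0) \<longrightarrow>
        (\<forall>t\<in>{0..T}. (\<Sum>k\<in>{k. k < K \<and> tt k \<le> t}. x k * \<Gamma> t (tt k)) \<ge> 0))"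

end

theory Submission
  imports Defs
begin

text \<open>With \<open>F t = \<rho>([0,t])\<close> (resp. \<open>\<rho>([0,t))\<close>), both double kernels have the form
  \<open>\<Gamma>(t,s) = G(F t - F s)\<close> with \<open>F\<close> nonnegative and nondecreasing, so they are obtained
  from \<open>G\<close> by a monotone time change. The transformed times \<open>F t\<^sub>1 \<le> \<dots> \<le> F t\<^sub>K\<close> may
  coincide; adding up the weights \<open>x\<^sub>k\<close> of coinciding times gives a configuration with
  strictly increasing times, whose hypotheses are those of \<open>\<Gamma>\<close> at the last index of each
  block of coinciding times.\<close>

lemma finite_strict_mono_enumeration:
  fixes U :: "'a::linorder set"
  assumes "finite U"
  obtains w :: "nat \<Rightarrow> 'a" where "strict_mono_on {..<card U} w" "w ` {..<card U} = U"
proof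
  let ?xs = "sorted_list_of_set U"
  show "strict_mono_on {..<card U} ((!) ?xs)"
    using sorted_wrt_nth_less[OF strict_sorted_list_of_set]
    by (intro strict_mono_onI) (simp add: assms)
  show "(!) ?xs ` {..<card U} = U"
    using assms by (metis atLeast_upt image_set length_sorted_list_of_set map_nth set_sorted_list_of_set)
qed

lemma mono_on_sublevel_eq_lessThan:
  fixes f :: "nat \<Rightarrow> 'a::linorder"
  assumes "mono_on {..<K} f"
  obtains m where "m \<le> K" "{k. k < K \<and> f k \<le> c} = {..<m}"
proof -
  have "\<exists>m\<le>K. {k. k < K \<and> f k \<le> c} = {..<m}"
    using assms
  proof (induction K)
    case 0
    then show ?case by simp
  next
    case (Suc K)
    then obtain m where "m \<le> K" and m: "{k. k < K \<and> f k \<le> c} = {..<m}"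
      by (metis lessThan_Suc mono_on_subset subset_insertI)
    show ?case
    proof (cases "f K \<le> c")
      case True
      have "f k \<le> c" if "k < K" for k
        using Suc.prems that True by (meson dual_order.trans le_less lessThan_iff mono_onD less_Suc_eq)
      then have "{k. k < Suc K \<and> f k \<le> c} = {..<Suc K}"
        using True less_Suc_eq by auto
      then show ?thesis by blast
    next
      case False
      then have "{k. k < Suc K \<and> f k \<le> c} = {..<m}"
        using m less_Suc_eq by auto
      then show ?thesis using \<open>m \<le> K\<close> le_SucI by blast
    qed
  qed
  then show thesis using that by blast
qed

lemma mono_on_sublevel_eq_atMost:
  fixes f :: "nat \<Rightarrow> 'a::linorder"
  assumes f_mono: "mono_on {..<K} f" and "k < K"
  obtains l where "l < K" "f l = f k" "{i. i < K \<and> f i \<le> f k} = {..l}"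
proof -
  obtain m where prefix: "{i. i < K \<and> f i \<le> f k} = {..<m}"
    using mono_on_sublevel_eq_lessThan[OF f_mono] by blast
  have "k < m"
    using \<open>k < K\<close> unfolding lessThan_iff[symmetric] prefix[symmetric] by simp
  define l where "l = m - 1"
  have "l \<in> {i. i < K \<and> f i \<le> f k}" "k \<le> l"
    unfolding prefix l_def using \<open>k < m\<close> by auto
  then have "l < K" "f l = f k"
    using \<open>k < K\<close> mono_onD[OF f_mono, of k l] by auto
  moreover have "{i. i < K \<and> f i \<le> f k} = {..l}"
    unfolding prefix l_def using \<open>k < m\<close> by auto
  ultimately show thesis
    by (rule that)
qed

lemma sum_regroup_by_values:
  fixes x :: "'a \<Rightarrow> 'r::semiring_0" and h :: "'b \<Rightarrow> 'r"
  assumes "finite A"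
  shows "(\<Sum>k\<in>A. x k * h (u k)) = (\<Sum>z\<in>u ` A. (\<Sum>k\<in>{k\<in>A. u k = z}. x k) * h z)"
  unfolding sum.image_gen[OF assms, of "\<lambda>k. x k * h (u k)" u]
  by (auto intro!: sum.cong simp: sum_distrib_right)

lemma sum_sublevel_regroup:
  fixes u w :: "nat \<Rightarrow> 'a::linorder" and x :: "nat \<Rightarrow> 'r::semiring_0" and h :: "'a \<Rightarrow> 'r"
  assumes w_inj: "inj_on w {..<M}" and w_onto: "w ` {..<M} = u ` {..<K}"
  shows "(\<Sum>k\<in>{k. k < K \<and> u k \<le> c}. x k * h (u k))
    = (\<Sum>j\<in>{j. j < M \<and> w j \<le> c}. (\<Sum>k\<in>{k. k < K \<and> u k = w j}. x k) * h (w j))"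
proof -
  let ?A = "{k. k < K \<and> u k \<le> c}" and ?J = "{j. j < M \<and> w j \<le> c}"
  have "u ` ?A = u ` {..<K} \<inter> {..c}"
    by auto
  also have "\<dots> = w ` ?J"
    unfolding w_onto[symmetric] by auto
  finally have image: "u ` ?A = w ` ?J" .
  have inj: "inj_on w ?J"
    using w_inj by (rule inj_on_subset) auto
  have fibre: "{k\<in>?A. u k = w j} = {k. k < K \<and> u k = w j}" if "j \<in> ?J" for j
    using that by auto
  have "(\<Sum>k\<in>?A. x k * h (u k)) = (\<Sum>z\<in>w ` ?J. (\<Sum>k\<in>{k\<in>?A. u k = z}. x k) * h z)"
    unfolding image[symmetric] by (rule sum_regroup_by_values) simp
  also have "\<dots> = (\<Sum>j\<in>?J. (\<Sum>k\<in>{k\<in>?A. u k = w j}. x k) * h (w j))"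
    by (simp add: sum.reindex[OF inj])
  also have "\<dots> = (\<Sum>j\<in>?J. (\<Sum>k\<in>{k. k < K \<and> u k = w j}. x k) * h (w j))"
    using fibre by (intro sum.cong) simp_all
  finally show ?thesis .
qed

lemma preserves_nonneg_conv_nondecreasing_times:
  fixes G :: "real \<Rightarrow> real" and u x :: "nat \<Rightarrow> real"
  assumes G_pres: "preserves_nonneg_conv G"
    and u_mono: "mono_on {..<K} u"
    and u_nonneg: "\<And>k. k < K \<Longrightarrow> 0 \<le> u k"
    and hyp: "\<And>k. k < K \<Longrightarrow> 0 \<le> (\<Sum>k'\<le>k. x k' * G (u k - u k'))"
    and "0 \<le> t"
  shows "0 \<le> (\<Sum>k\<in>{k. k < K \<and> u k \<le> t}. x k * G (t - u k))"
proof -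
  define M where "M = card (u ` {..<K})"
  obtain w where w_mono: "strict_mono_on {..<M} w" and w_onto: "w ` {..<M} = u ` {..<K}"
    using finite_strict_mono_enumeration[of "u ` {..<K}"] unfolding M_def by blast
  define y where "y j = (\<Sum>k\<in>{k. k < K \<and> u k = w j}. x k)" for j
  note regroup = sum_sublevel_regroup[OF strict_mono_on_imp_inj_on[OF w_mono] w_onto,
      of x, folded y_def]
  have y_hyp: "0 \<le> (\<Sum>j'\<le>j. y j' * G (w j - w j'))" if "j < M" for j
  proof -
    have "w j \<in> u ` {..<K}"
      using \<open>j < M\<close> w_onto by blast
    then obtain k where k: "k < K" "u k = w j"
      by auto
    obtain l where "l < K" "u l = u k" "{k'. k' < K \<and> u k' \<le> u k} = {..l}"
      by (rule mono_on_sublevel_eq_atMost[OF u_mono \<open>k < K\<close>])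
    then have l: "l < K" "u l = w j" "{k'. k' < K \<and> u k' \<le> w j} = {..l}"
      unfolding k(2) .
    have "{j'. j' < M \<and> w j' \<le> w j} = {..j}"
      using \<open>j < M\<close> by (auto simp: strict_mono_on_less_eq[OF w_mono])
    then have "(\<Sum>j'\<le>j. y j' * G (w j - w j')) = (\<Sum>k'\<le>l. x k' * G (u l - u k'))"
      using regroup[where c = "w j" and h = "\<lambda>z. G (w j - z)"] l by simp
    then show ?thesis
      using hyp[OF \<open>l < K\<close>] by simp
  qed
  show ?thesis
  proof (cases "M = 0")
    case True
    then have "K = 0"
      unfolding M_def by (simp add: lessThan_empty_iff)
    then show ?thesis by simp
  next
    case False
    have "w 0 \<in> u ` {..<K}"
      using w_onto False by blast
    then have "0 \<le> w 0"
      using u_nonneg by auto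
    moreover have "\<forall>i j. i < j \<longrightarrow> j < M \<longrightarrow> w i < w j"
      using w_mono by (auto intro: strict_mono_onD)
    ultimately have "0 \<le> (\<Sum>j\<in>{j. j < M \<and> w j \<le> t}. y j * G (t - w j))"
      using G_pres y_hyp False \<open>0 \<le> t\<close> unfolding preserves_nonneg_conv_def by simp
    then show ?thesis
      using regroup[where c = t and h = "\<lambda>z. G (t - z)"] by simp
  qed
qed

lemma preserves_nonneg_double_time_change:
  fixes G F :: "real \<Rightarrow> real" and \<Gamma> :: "real \<Rightarrow> real \<Rightarrow> real"
  assumes G_pres: "preserves_nonneg_conv G"
    and F_mono: "mono_on {0..} F"
    and F_nonneg: "\<And>t. 0 \<le> t \<Longrightarrow> 0 \<le> F t"
    and \<Gamma>_eq: "\<And>s t. 0 \<le> s \<Longrightarrow> s \<le> t \<Longrightarrow> \<Gamma> t s = G (F t - F s)"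
  shows "preserves_nonneg_double \<Gamma>"
  unfolding preserves_nonneg_double_def
proof (intro allI impI ballI)
  fix T t :: real and K :: nat and x tt :: "nat \<Rightarrow> real"
  assume "0 < T" "1 \<le> K" and tt0: "0 \<le> tt 0"
    and tt_inc: "\<forall>i j. i < j \<longrightarrow> j < K \<longrightarrow> tt i < tt j" and "tt (K - 1) < T"
    and hyp: "\<forall>k<K. 0 \<le> (\<Sum>k'\<le>k. x k' * \<Gamma> (tt k) (tt k'))"
    and t: "t \<in> {0..T}"
  have tt_mono: "mono_on {..<K} tt"
    using tt_inc by (intro mono_onI) (auto simp: le_less)
  have tt_nonneg: "0 \<le> tt k" if "k < K" for k
    using tt0 mono_onD[OF tt_mono, of 0 k] that by simp
  obtain m where "m \<le> K" and prefix: "{k. k < K \<and> tt k \<le> t} = {..<m}"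
    using mono_on_sublevel_eq_lessThan[OF tt_mono] by blast
  have before_t: "k < K" "tt k \<le> t" if "k < m" for k
    using that prefix by (auto simp: set_eq_iff)
  have FT_mono: "mono_on {..<m} (\<lambda>k. F (tt k))"
    using before_t tt_nonneg mono_onD[OF tt_mono]
    by (intro mono_onI mono_onD[OF F_mono]) auto
  have "0 \<le> (\<Sum>k\<in>{k. k < m \<and> F (tt k) \<le> F t}. x k * G (F t - F (tt k)))"
  proof (rule preserves_nonneg_conv_nondecreasing_times[OF G_pres FT_mono])
    show "0 \<le> F (tt k)" if "k < m" for k
      using that before_t tt_nonneg F_nonneg by blast
    show "0 \<le> F t"
      using t F_nonneg by simp
    show "0 \<le> (\<Sum>k'\<le>k. x k' * G (F (tt k) - F (tt k')))" if "k < m" for k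
    proof -
      have "(\<Sum>k'\<le>k. x k' * \<Gamma> (tt k) (tt k')) = (\<Sum>k'\<le>k. x k' * G (F (tt k) - F (tt k')))"
        using that before_t tt_nonneg mono_onD[OF tt_mono] by (intro sum.cong refl) (simp add: \<Gamma>_eq)
      then show ?thesis
        using hyp before_t that by metis
    qed
  qed
  also have "{k. k < m \<and> F (tt k) \<le> F t} = {..<m}"
    using before_t tt_nonneg t by (auto intro!: mono_onD[OF F_mono])
  also have "(\<Sum>k<m. x k * G (F t - F (tt k))) = (\<Sum>k<m. x k * \<Gamma> t (tt k))"
    using before_t tt_nonneg by (simp add: \<Gamma>_eq)
  finally show "0 \<le> (\<Sum>k\<in>{k. k < K \<and> tt k \<le> t}. x k * \<Gamma> t (tt k))"
    unfolding prefix .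
qed

lemma measure_half_open_eq_diff:
  fixes \<rho> :: "real measure"
  assumes rho_sets: "sets \<rho> = sets (restrict_space borel {0::real..})"
    and rho_fin: "\<And>t. emeasure \<rho> {0..t} \<noteq> \<infinity>"
    and "0 \<le> s" "s \<le> t"
  shows "measure \<rho> {s<..t} = measure \<rho> {0..t} - measure \<rho> {0..s}"
    and "measure \<rho> {s..<t} = measure \<rho> {0..<t} - measure \<rho> {0..<s}"
proof -
  have sets: "A \<in> sets \<rho>" if "A \<in> sets borel" "A \<subseteq> {0..}" for A :: "real set"
    using that unfolding rho_sets by (simp add: sets_restrict_space_iff)
  have "emeasure \<rho> {0..<t} \<le> emeasure \<rho> {0..t}"
    by (intro emeasure_mono sets) auto
  then have fin_Ico: "emeasure \<rho> {0..<t} \<noteq> \<infinity>"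
    using rho_fin[of t] by (auto simp: top_unique)
  have "{s<..t} = {0..t} - {0..s}" "{s..<t} = {0..<t} - {0..<s}"
    using \<open>0 \<le> s\<close> by auto
  then show "measure \<rho> {s<..t} = measure \<rho> {0..t} - measure \<rho> {0..s}"
    and "measure \<rho> {s..<t} = measure \<rho> {0..<t} - measure \<rho> {0..<s}"
    using \<open>s \<le> t\<close> by (auto intro!: measure_Diff rho_fin fin_Ico sets)
qed

lemma mono_on_measure_from_zero:
  fixes \<rho> :: "real measure"
  assumes rho_sets: "sets \<rho> = sets (restrict_space borel {0::real..})"
    and rho_fin: "\<And>t. emeasure \<rho> {0..t} \<noteq> \<infinity>"
  shows "mono_on {0..} (\<lambda>t. measure \<rho> {0..t})"
    and "mono_on {0..} (\<lambda>t. measure \<rho> {0..<t})"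
proof -
  have "measure \<rho> {0..s} \<le> measure \<rho> {0..t} \<and> measure \<rho> {0..<s} \<le> measure \<rho> {0..<t}"
    if "0 \<le> s" "s \<le> t" for s t
    using measure_half_open_eq_diff[OF rho_sets rho_fin that]
      measure_nonneg[of \<rho> "{s<..t}"] measure_nonneg[of \<rho> "{s..<t}"] by simp
  then show "mono_on {0..} (\<lambda>t. measure \<rho> {0..t})" "mono_on {0..} (\<lambda>t. measure \<rho> {0..<t})"
    by (auto intro!: mono_onI)
qed

theorem mainTheorem8:
  fixes G :: "real \<Rightarrow> real" and \<rho> :: "real measure"
  assumes G_nonneg: "\<forall>u\<ge>0. G u \<ge> 0"
    and G0: "G 0 > 0"
    and G_pres: "preserves_nonneg_conv G"
    and rho_sets: "sets \<rho> = sets (restrict_space borel {0::real..})"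
    and rho_fin: "\<forall>C. compact C \<and> C \<subseteq> {0..} \<longrightarrow> emeasure \<rho> C < \<infinity>"
  shows "preserves_nonneg_double (\<lambda>t s. G (measure \<rho> {s<..t})) \<and>
         preserves_nonneg_double (\<lambda>t s. G (measure \<rho> {s..<t}))"
proof
  have fin: "emeasure \<rho> {0..t} \<noteq> \<infinity>" for t :: real
    using rho_fin[rule_format, of "{0..t}"] by auto
  note diff = measure_half_open_eq_diff[OF rho_sets fin]
  note mono = mono_on_measure_from_zero[OF rho_sets fin]
  show "preserves_nonneg_double (\<lambda>t s. G (measure \<rho> {s<..t}))"
    by (rule preserves_nonneg_double_time_change[OF G_pres mono(1)])
      (simp_all add: diff(1))
  show "preserves_nonneg_double (\<lambda>t s. G (measure \<rho> {s..<t}))"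
    \<comment> \<open>not by simp: \<open>{0..<t}\<close> matches the left-hand side of \<open>diff(2)\<close>, so rewriting loops\<close>
    by (rule preserves_nonneg_double_time_change[OF G_pres mono(2)])
      (intro measure_nonneg arg_cong[where f = G] diff(2))+
qed

end
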